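(* Let $f\colon(X,\overline p)\to(Y,\overline q)$ be a stratified homotopy equivalence between perverse spaces with $D\overline p=f^*D\overline q$. Then the simplicial map $\mathscr G_{\overline p,\overline q}f\colon\mathscr G_{\overline p}X\to\mathscr G_{\overline q}Y$, $\sigma\mapsto f\circ\sigma$, is a homotopy equivalence.
   Context: Filtered spaces. A filtered space of formal dimension $n$ is a nonempty space $X$ with closed subsets $\emptyset=X_{-1}\subseteq\cdots\subseteq X_{n-1}\subsetneq X_n=X$. Strata are the nonempty connected components of $X_i\setminus X_{i-1}$, with codimension $n-i$. Strata in $X\setminus X_{n-1}$ are regular. Stratified maps and homotopies. A stratified map $f$ sends each stratum $S$ into a stratum $S^f$ with $\operatorname{codim}S^f\le\operatorname{codim}S$. A stratified homotopy between $f$ and $g$ is a stratified map $X\times[0,1]\to Y$ restricting to $f$ and $g$, where $X\times[0,1]$ is filtered by $X_i\times[0,1]$. We write $f\simeq_s g$. Stratified homotopy equivalences. A stratified homotopy equivalence is a stratified map $f\colon X\to Y$ for which there exists a stratified map $g\colon Y\to X$ such that: - $g\circ f\simeq_s\mathrm{id}_X$ and $f\circ g\simeq_s\mathrm{id}_Y$; - $\operatorname{codim}S=\operatorname{codim}S^f$ for all strata $S$ of $X$, and $\operatorname{codim}T=\operatorname{codim}T^g$ for all strata $T$ of $Y$. Perversities. A perversity is a map $\overline p$ from strata to $\mathbb Z\cup\{\pm\infty\}$ vanishing on regular strata. The top perversity is $\overline t(S)=\operatorname{codim}S-2$, and $D\overline p=\overline t-\overline p$. The pullback perversity is $f^*\overline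 q(S)=\overline q(S^f)$. Full simplices and the Gajer space. A simplex $\sigma\colon\Delta^j\to X$ is $\overline p$-allowable if $\dim\sigma^{-1}S\le j-\operatorname{codim}S+\overline p(S)$ for all singular strata. Here $\dim$ is polyhedral dimension, with $\dim\emptyset=-\infty$. A simplex is $\overline p$-full if it and all its iterated faces are allowable. $\mathscr G_{\overline p}X\subseteq\mathrm{Sing}\,X$ consists of the $\overline p$-full simplices. *)

theory Defs
  imports "HOL-Analysis.Analysis" "HOL-Homology.Homology" "HOL-Library.Extended_Real"
begin

text \<open>A filtered space: topology, formal dimension n, and closed subsets
  X_{-1} \<subseteq> X_0 \<subseteq> ... \<subseteq> X_n (indexed by integers -1..n; other indices unused).\<close>

record 'a filtered_space =
  ftop :: "'a topology"
  fdim :: nat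
  fil  :: "int \<Rightarrow> 'a set"

definition filtered_space :: "'a filtered_space \<Rightarrow> bool" where
  "filtered_space X \<longleftrightarrow>
     topspace (ftop X) \<noteq> {} \<and>
     (\<forall>i. -1 \<le> i \<and> i \<le> int (fdim X) \<longrightarrow> closedin (ftop X) (fil X i)) \<and>
     fil X (-1) = {} \<and>
     (\<forall>i. -1 \<le> i \<and> i < int (fdim X) \<longrightarrow> fil X i \<subseteq> fil X (i + 1)) \<and>
     fil X (int (fdim X) - 1) \<subset> fil X (int (fdim X)) \<and>
     fil X (int (fdim X)) = topspace (ftop X)"

definition stratum :: "'a filtered_space \<Rightarrow> 'a set \<Rightarrow> bool" where
  "stratum X S \<longleftrightarrow>
     (\<exists>i. 0 \<le> i \<and> i \<le> int (fdim X) \<and>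
          S \<in> connected_components_of (subtopology (ftop X) (fil X i - fil X (i - 1))))"

definition stratum_level :: "'a filtered_space \<Rightarrow> 'a set \<Rightarrow> int" where
  "stratum_level X S = (THE i. 0 \<le> i \<and> i \<le> int (fdim X) \<and>
      S \<in> connected_components_of (subtopology (ftop X) (fil X i - fil X (i - 1))))"

definition codim :: "'a filtered_space \<Rightarrow> 'a set \<Rightarrow> int" where
  "codim X S = int (fdim X) - stratum_level X S"

definition target_stratum :: "'b filtered_space \<Rightarrow> ('a \<Rightarrow> 'b) \<Rightarrow> 'a set \<Rightarrow> 'b set" where
  "target_stratum Y f S = (THE T. stratum Y T \<and> f ` S \<subseteq> T)"

definition stratified_map :: "'a filtered_space \<Rightarrow> 'b filtered_space \<Rightarrow> ('a \<Rightarrow> 'b) \<Rightarrow> bool" where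
  "stratified_map X Y f \<longleftrightarrow>
     continuous_map (ftop X) (ftop Y) f \<and>
     (\<forall>S. stratum X S \<longrightarrow>
        (\<exists>T. stratum Y T \<and> f ` S \<subseteq> T \<and> codim Y T \<le> codim X S))"

definition cylinder :: "'a filtered_space \<Rightarrow> ('a \<times> real) filtered_space" where
  "cylinder X = \<lparr> ftop = prod_topology (ftop X) (top_of_set {0..1}),
                  fdim = fdim X,
                  fil = (\<lambda>i. fil X i \<times> {0..1}) \<rparr>"

definition stratified_homotopic ::
  "'a filtered_space \<Rightarrow> 'b filtered_space \<Rightarrow> ('a \<Rightarrow> 'b) \<Rightarrow> ('a \<Rightarrow> 'b) \<Rightarrow> bool" where
  "stratified_homotopic X Y f g \<longleftrightarrow>
     (\<exists>h. stratified_map (cylinder X) Y h \<and>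
          (\<forall>x\<in>topspace (ftop X). h (x, 0) = f x \<and> h (x, 1) = g x))"

definition stratified_homotopy_equivalence ::
  "'a filtered_space \<Rightarrow> 'b filtered_space \<Rightarrow> ('a \<Rightarrow> 'b) \<Rightarrow> bool" where
  "stratified_homotopy_equivalence X Y f \<longleftrightarrow>
     stratified_map X Y f \<and>
     (\<exists>g. stratified_map Y X g \<and>
          stratified_homotopic X X (g \<circ> f) id \<and>
          stratified_homotopic Y Y (f \<circ> g) id \<and>
          (\<forall>S. stratum X S \<longrightarrow> codim X S = codim Y (target_stratum Y f S)) \<and>
          (\<forall>T. stratum Y T \<longrightarrow> codim Y T = codim X (target_stratum X g T)))"

text \<open>Perversities take values in \<int> \<union> {\<plusminus>\<infinity>}, modelled in ereal; only values on strata matter.\<close>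

definition perversity :: "'a filtered_space \<Rightarrow> ('a set \<Rightarrow> ereal) \<Rightarrow> bool" where
  "perversity X p \<longleftrightarrow>
     (\<forall>S. stratum X S \<longrightarrow>
        (p S \<in> range (\<lambda>k::int. ereal (real_of_int k)) \<union> {\<infinity>, -\<infinity>}) \<and>
        (codim X S = 0 \<longrightarrow> p S = 0))"

definition top_perversity :: "'a filtered_space \<Rightarrow> 'a set \<Rightarrow> ereal" where
  "top_perversity X S = ereal (real_of_int (codim X S - 2))"

definition dual_perversity :: "'a filtered_space \<Rightarrow> ('a set \<Rightarrow> ereal) \<Rightarrow> 'a set \<Rightarrow> ereal" where
  "dual_perversity X p S = top_perversity X S - p S"

definition pullback_perversity ::
  "'b filtered_space \<Rightarrow> ('a \<Rightarrow> 'b) \<Rightarrow> ('b set \<Rightarrow> ereal) \<Rightarrow> 'a set \<Rightarrow> ereal" where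
  "pullback_perversity Y f q S = q (target_stratum Y f S)"

text \<open>dim A \<le> b (polyhedral dimension): A is empty (dim \<emptyset> = -\<infinity>), or A is contained in a
  polyhedron of dimension \<le> b, i.e. a finite union of geometric simplices
  (convex hulls of affinely independent finite sets) each of dimension \<le> b.\<close>

text \<open>Points of \<Delta>^j live in nat \<Rightarrow> real (coordinatewise linear structure), which is not a
  real_vector instance, so affine independence and convex hulls of finite point sets are
  written out explicitly.\<close>

definition aff_indep_fin :: "(nat \<Rightarrow> real) set \<Rightarrow> bool" where
  "aff_indep_fin T \<longleftrightarrow> finite T \<and>
     (\<forall>u. (\<Sum>v\<in>T. u v) = 0 \<and> (\<forall>i. (\<Sum>v\<in>T. u v * v i) = 0) \<longrightarrow> (\<forall>v\<in>T. u v = 0))"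

definition conv_hull_fin :: "(nat \<Rightarrow> real) set \<Rightarrow> (nat \<Rightarrow> real) set" where
  "conv_hull_fin T = {x. \<exists>u. (\<forall>v\<in>T. 0 \<le> u v) \<and> (\<Sum>v\<in>T. u v) = 1 \<and>
                          x = (\<lambda>i. \<Sum>v\<in>T. u v * v i)}"

definition pdim_le :: "(nat \<Rightarrow> real) set \<Rightarrow> ereal \<Rightarrow> bool" where
  "pdim_le A b \<longleftrightarrow> A = {} \<or>
     (\<exists>\<T>. finite \<T> \<and>
          (\<forall>T\<in>\<T>. aff_indep_fin T \<and> ereal (real (card T)) - 1 \<le> b) \<and>
          A \<subseteq> \<Union> (conv_hull_fin ` \<T>))"

definition allowable ::
  "'a filtered_space \<Rightarrow> ('a set \<Rightarrow> ereal) \<Rightarrow> nat \<Rightarrow> ((nat \<Rightarrow> real) \<Rightarrow> 'a) \<Rightarrow> bool" where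
  "allowable X p j \<sigma> \<longleftrightarrow>
     (\<forall>S. stratum X S \<and> codim X S > 0 \<longrightarrow>
        pdim_le {t \<in> standard_simplex j. \<sigma> t \<in> S}
                (ereal (real_of_int (int j - codim X S)) + p S))"

fun full ::
  "'a filtered_space \<Rightarrow> ('a set \<Rightarrow> ereal) \<Rightarrow> nat \<Rightarrow> ((nat \<Rightarrow> real) \<Rightarrow> 'a) \<Rightarrow> bool" where
  "full X p 0 \<sigma> = allowable X p 0 \<sigma>"
| "full X p (Suc j) \<sigma> =
     (allowable X p (Suc j) \<sigma> \<and> (\<forall>k\<le>Suc j. full X p j (singular_face (Suc j) k \<sigma>)))"

definition gajer :: "'a filtered_space \<Rightarrow> ('a set \<Rightarrow> ereal) \<Rightarrow> nat \<Rightarrow> ((nat \<Rightarrow> real) \<Rightarrow> 'a) set" where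
  "gajer X p j = {\<sigma>. singular_simplex j (ftop X) \<sigma> \<and> full X p j \<sigma>}"

definition gajer_map :: "('a \<Rightarrow> 'b) \<Rightarrow> nat \<Rightarrow> ((nat \<Rightarrow> real) \<Rightarrow> 'a) \<Rightarrow> ((nat \<Rightarrow> real) \<Rightarrow> 'b)" where
  "gajer_map f j \<sigma> = simplex_map j f \<sigma>"

text \<open>Simplicial operators \<theta> : [m] \<rightarrow> [n] (monotone maps), acting on Sing by precomposition with
  the induced affine map \<Delta>^m \<rightarrow> \<Delta>^n.\<close>

definition simp_op :: "nat \<Rightarrow> nat \<Rightarrow> (nat \<Rightarrow> nat) \<Rightarrow> bool" where
  "simp_op m n \<theta> \<longleftrightarrow> (\<forall>i\<le>m. \<theta> i \<le> n) \<and> (\<forall>i k. i \<le> k \<and> k \<le> m \<longrightarrow> \<theta> i \<le> \<theta> k)"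

definition simp_op_map :: "nat \<Rightarrow> (nat \<Rightarrow> nat) \<Rightarrow> (nat \<Rightarrow> real) \<Rightarrow> (nat \<Rightarrow> real)" where
  "simp_op_map m \<theta> t = (\<lambda>i. \<Sum>k\<in>{k. k \<le> m \<and> \<theta> k = i}. t k)"

definition sop_act :: "nat \<Rightarrow> (nat \<Rightarrow> nat) \<Rightarrow> ((nat \<Rightarrow> real) \<Rightarrow> 'a) \<Rightarrow> ((nat \<Rightarrow> real) \<Rightarrow> 'a)" where
  "sop_act m \<theta> \<sigma> = restrict (\<sigma> \<circ> simp_op_map m \<theta>) (standard_simplex m)"

type_synonym 'a ssub = "nat \<Rightarrow> ((nat \<Rightarrow> real) \<Rightarrow> 'a) set"
type_synonym ('a, 'b) smap = "nat \<Rightarrow> ((nat \<Rightarrow> real) \<Rightarrow> 'a) \<Rightarrow> ((nat \<Rightarrow> real) \<Rightarrow> 'b)"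

definition simplicial_map :: "'a ssub \<Rightarrow> 'b ssub \<Rightarrow> ('a, 'b) smap \<Rightarrow> bool" where
  "simplicial_map K L \<phi> \<longleftrightarrow>
     (\<forall>n \<sigma>. \<sigma> \<in> K n \<longrightarrow> \<phi> n \<sigma> \<in> L n) \<and>
     (\<forall>m n \<theta> \<sigma>. simp_op m n \<theta> \<and> \<sigma> \<in> K n \<longrightarrow> \<phi> m (sop_act m \<theta> \<sigma>) = sop_act m \<theta> (\<phi> n \<sigma>))"

text \<open>An elementary simplicial homotopy K \<times> \<Delta>[1] \<rightarrow> L from \<phi> to \<psi>: the n-simplices of
  \<Delta>[1] are the monotone maps \<alpha> : [n] \<rightarrow> [1].\<close>

definition elem_simplicial_homotopy ::
  "'a ssub \<Rightarrow> 'b ssub \<Rightarrow> ('a, 'b) smap \<Rightarrow> ('a, 'b) smap \<Rightarrow> bool" where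
  "elem_simplicial_homotopy K L \<phi> \<psi> \<longleftrightarrow>
     (\<exists>H :: nat \<Rightarrow> ((nat \<Rightarrow> real) \<Rightarrow> 'a) \<Rightarrow> (nat \<Rightarrow> nat) \<Rightarrow> ((nat \<Rightarrow> real) \<Rightarrow> 'b).
        (\<forall>n \<sigma> \<alpha>. \<sigma> \<in> K n \<and> simp_op n 1 \<alpha> \<longrightarrow> H n \<sigma> \<alpha> \<in> L n) \<and>
        (\<forall>n \<sigma> \<alpha> \<beta>. \<sigma> \<in> K n \<and> (\<forall>i\<le>n. \<alpha> i = \<beta> i) \<longrightarrow> H n \<sigma> \<alpha> = H n \<sigma> \<beta>) \<and>
        (\<forall>m n \<theta> \<sigma> \<alpha>. simp_op m n \<theta> \<and> simp_op n 1 \<alpha> \<and> \<sigma> \<in> K n \<longrightarrow>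
            H m (sop_act m \<theta> \<sigma>) (\<alpha> \<circ> \<theta>) = sop_act m \<theta> (H n \<sigma> \<alpha>)) \<and>
        (\<forall>n \<sigma>. \<sigma> \<in> K n \<longrightarrow> H n \<sigma> (\<lambda>_. 0) = \<phi> n \<sigma> \<and> H n \<sigma> (\<lambda>_. 1) = \<psi> n \<sigma>))"

inductive simplicially_homotopic :: "'a ssub \<Rightarrow> 'b ssub \<Rightarrow> ('a, 'b) smap \<Rightarrow> ('a, 'b) smap \<Rightarrow> bool"
  for K L where
  elem: "elem_simplicial_homotopy K L \<phi> \<psi> \<Longrightarrow> simplicially_homotopic K L \<phi> \<psi>"
| refl: "simplicially_homotopic K L \<phi> \<phi>"
| sym: "simplicially_homotopic K L \<phi> \<psi> \<Longrightarrow> simplicially_homotopic K L \<psi> \<phi>"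
| trans: "simplicially_homotopic K L \<phi> \<psi> \<Longrightarrow> simplicially_homotopic K L \<psi> \<rho> \<Longrightarrow>
          simplicially_homotopic K L \<phi> \<rho>"

definition simplicial_homotopy_equivalence :: "'a ssub \<Rightarrow> 'b ssub \<Rightarrow> ('a, 'b) smap \<Rightarrow> bool" where
  "simplicial_homotopy_equivalence K L \<phi> \<longleftrightarrow>
     simplicial_map K L \<phi> \<and>
     (\<exists>\<psi>. simplicial_map L K \<psi> \<and>
          simplicially_homotopic K K (\<lambda>n \<sigma>. \<psi> n (\<phi> n \<sigma>)) (\<lambda>n \<sigma>. \<sigma>) \<and>
          simplicially_homotopic L L (\<lambda>n \<sigma>. \<phi> n (\<psi> n \<sigma>)) (\<lambda>n \<sigma>. \<sigma>))"

end

theory Submission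
  imports Defs
begin

(* A stratified homotopy h from k to the identity maps each S \<times> [0,1] into a single stratum,
   which contains h (x, 1) = x; so h never moves a point out of its stratum, and neither does k.
   Applied to g \<circ> f and f \<circ> g this gives: f x \<in> T forces x \<in> T^g, and (T^g)^f = T, so the
   codimension hypotheses and D p = f^* D q yield p (T^g) = q T.  Hence the preimage of T under
   f \<circ> \<sigma> lies in the preimage of T^g under \<sigma>, with the same dimension bound: composition with f
   (and likewise with g) preserves fullness.  For the same reason the simplicial homotopies
   (\<sigma>, \<alpha>) \<mapsto> h (\<sigma> -, \<alpha>\<^sub>* -) induced by the stratified homotopies stay inside the Gajer spaces. *)

lemma fil_mono:
  assumes X: "filtered_space X" and "-1 \<le> i" "i \<le> j" "j \<le> int (fdim X)"
  shows "fil X i \<subseteq> fil X j"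
  using assms(3,4)
proof (induction j rule: int_ge_induct)
  case (step k)
  then have "fil X k \<subseteq> fil X (k + 1)"
    using X \<open>-1 \<le> i\<close> by (auto simp: filtered_space_def)
  with step show ?case by simp
qed simp

lemma stratum_subset_topspace: "stratum X S \<Longrightarrow> S \<subseteq> topspace (ftop X)"
  using connected_components_of_subset unfolding stratum_def by fastforce

lemma stratum_nonempty: "stratum X S \<Longrightarrow> S \<noteq> {}"
  using nonempty_connected_components_of unfolding stratum_def by blast

lemma stratum_eq_if_common_point:
  assumes X: "filtered_space X" and S: "stratum X S" and T: "stratum X T"
    and x: "x \<in> S" "x \<in> T"
  shows "S = T"
proof -
  obtain i where i: "0 \<le> i" "i \<le> int (fdim X)"
    "S \<in> connected_components_of (subtopology (ftop X) (fil X i - fil X (i - 1)))"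
    using S by (auto simp: stratum_def)
  obtain j where j: "0 \<le> j" "j \<le> int (fdim X)"
    "T \<in> connected_components_of (subtopology (ftop X) (fil X j - fil X (j - 1)))"
    using T by (auto simp: stratum_def)
  have xi: "x \<in> fil X i - fil X (i - 1)" and xj: "x \<in> fil X j - fil X (j - 1)"
    using connected_components_of_subset[OF i(3)] connected_components_of_subset[OF j(3)] x
    by auto
  have "\<not> i < j" "\<not> j < i"
    using fil_mono[OF X, of i "j - 1"] fil_mono[OF X, of j "i - 1"] i j xi xj by auto
  then have "i = j" by simp
  then show ?thesis using connected_components_of_overlap i(3) j(3) x by blast
qed

lemma stratum_cover:
  assumes X: "filtered_space X" and x: "x \<in> topspace (ftop X)"
  obtains S where "stratum X S" "x \<in> S"
proof -
  define i where "i = (LEAST k::nat. x \<in> fil X (int k))"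
  have "x \<in> fil X (int (fdim X))" using X x by (auto simp: filtered_space_def)
  then have xi: "x \<in> fil X (int i)" and "i \<le> fdim X"
    unfolding i_def by (rule LeastI, rule Least_le)
  have "x \<notin> fil X (int i - 1)"
  proof (cases i)
    case 0 then show ?thesis using X by (auto simp: filtered_space_def)
  next
    case (Suc m)
    then show ?thesis using not_less_Least[of m "\<lambda>k. x \<in> fil X (int k)"] i_def by auto
  qed
  define W where "W = subtopology (ftop X) (fil X (int i) - fil X (int i - 1))"
  have "x \<in> topspace W" using x xi \<open>x \<notin> fil X (int i - 1)\<close> by (simp add: W_def)
  then have "connected_component_of_set W x \<in> connected_components_of W"
    and "x \<in> connected_component_of_set W x"
    by (auto simp: connected_component_in_connected_components_of connected_component_of_refl)
  moreover have "stratum X (connected_component_of_set W x)"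
    unfolding stratum_def using calculation \<open>i \<le> fdim X\<close>
    by (intro exI[of _ "int i"]) (simp add: W_def)
  ultimately show ?thesis using that by blast
qed

lemma mem_stratum_if_stratum_preserved:
  assumes X: "filtered_space X" and x: "x \<in> topspace (ftop X)"
    and y: "\<And>S. stratum X S \<Longrightarrow> x \<in> S \<Longrightarrow> y \<in> S"
    and T: "stratum X T" "y \<in> T"
  shows "x \<in> T"
proof -
  obtain S where "stratum X S" "x \<in> S" using stratum_cover[OF X x] .
  moreover from calculation have "S = T"
    using stratum_eq_if_common_point[OF X _ T(1)] y T(2) by blast
  ultimately show ?thesis by simp
qed

lemma target_stratum_eqI:
  assumes Y: "filtered_space Y" and S: "stratum X S" and T: "stratum Y T" and "f ` S \<subseteq> T"
  shows "target_stratum Y f S = T"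
  unfolding target_stratum_def
proof (rule the_equality)
  fix T' assume "stratum Y T' \<and> f ` S \<subseteq> T'"
  moreover obtain x where "x \<in> S" using stratum_nonempty[OF S] by auto
  ultimately show "T' = T" using stratum_eq_if_common_point[OF Y, of T' T "f x"] T assms(4) by auto
qed (use T assms(4) in auto)

lemma
  assumes Y: "filtered_space Y" and f: "stratified_map X Y f" and S: "stratum X S"
  shows stratum_target_stratum: "stratum Y (target_stratum Y f S)"
    and image_subset_target_stratum: "f ` S \<subseteq> target_stratum Y f S"
proof -
  obtain T where "stratum Y T" "f ` S \<subseteq> T"
    using f S by (auto simp: stratified_map_def)
  moreover from calculation have "target_stratum Y f S = T"
    using target_stratum_eqI[OF Y S] by auto
  ultimately show "stratum Y (target_stratum Y f S)" "f ` S \<subseteq> target_stratum Y f S" by auto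
qed

lemma mem_target_stratum_if_image_mem:
  assumes X: "filtered_space X" and g: "stratified_map Y X g"
    and gf: "\<And>S x. stratum X S \<Longrightarrow> x \<in> S \<Longrightarrow> g (f x) \<in> S"
    and x: "x \<in> topspace (ftop X)" and T: "stratum Y T" "f x \<in> T"
  shows "x \<in> target_stratum X g T"
  using mem_stratum_if_stratum_preserved[OF X x gf stratum_target_stratum[OF X g T(1)]]
    image_subset_target_stratum[OF X g T(1)] T(2) by blast

lemma target_stratum_target_stratum:
  assumes X: "filtered_space X" and Y: "filtered_space Y"
    and f: "stratified_map X Y f" and g: "stratified_map Y X g"
    and fg: "\<And>T y. stratum Y T \<Longrightarrow> y \<in> T \<Longrightarrow> f (g y) \<in> T"
    and T: "stratum Y T"
  shows "target_stratum Y f (target_stratum X g T) = T"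
proof -
  let ?S = "target_stratum X g T"
  obtain y where y: "y \<in> T" using stratum_nonempty[OF T] by auto
  have S: "stratum X ?S" and "g y \<in> ?S"
    using stratum_target_stratum[OF X g T] image_subset_target_stratum[OF X g T] y by auto
  then have "f (g y) \<in> target_stratum Y f ?S"
    using image_subset_target_stratum[OF Y f S] by auto
  then show ?thesis
    using stratum_eq_if_common_point[OF Y stratum_target_stratum[OF Y f S] T] fg[OF T y] by blast
qed

lemma stratum_cylinder:
  assumes "stratum X S"
  obtains C where "stratum (cylinder X) C" "S \<times> {0..1} \<subseteq> C"
proof -
  obtain i where i: "0 \<le> i" "i \<le> int (fdim X)"
    "S \<in> connected_components_of (subtopology (ftop X) (fil X i - fil X (i - 1)))"
    using assms by (auto simp: stratum_def)
  define W where "W = subtopology (ftop (cylinder X)) (fil (cylinder X) i - fil (cylinder X) (i - 1))"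
  have "W = subtopology (prod_topology (ftop X) (top_of_set {0..1}))
        ((fil X i - fil X (i - 1)) \<times> {0..1})"
    by (simp add: W_def cylinder_def Times_Diff_distrib1)
  moreover have "connectedin (ftop X) S" "S \<subseteq> fil X i - fil X (i - 1)"
    using connectedin_connected_components_of[OF i(3)] connected_components_of_subset[OF i(3)]
    by (auto simp: connectedin_subtopology)
  ultimately have SI: "connectedin W (S \<times> {0..1})"
    by (auto simp: connectedin_subtopology connectedin_Times)
  obtain x where x: "x \<in> S" using assms stratum_nonempty by blast
  then have x1: "(x, 1) \<in> S \<times> {0..1::real}" by auto
  define C where "C = connected_component_of_set W (x, 1)"
  have "C \<in> connected_components_of W"
    using connectedin_subset_topspace[OF SI] x1 unfolding C_def
    by (metis connected_component_in_connected_components_of subsetD)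
  then have "stratum (cylinder X) C"
    unfolding stratum_def using i(1,2) by (auto simp: W_def cylinder_def)
  moreover have "S \<times> {0..1} \<subseteq> C"
    unfolding C_def by (rule connected_component_of_maximal[OF SI x1])
  ultimately show ?thesis using that by blast
qed

lemma stratified_homotopy_to_id_stays_in_stratum:
  assumes X: "filtered_space X" and h: "stratified_map (cylinder X) X h"
    and h1: "\<And>x. x \<in> topspace (ftop X) \<Longrightarrow> h (x, 1) = x"
    and S: "stratum X S" and x: "x \<in> S" and s: "s \<in> {0..1}"
  shows "h (x, s) \<in> S"
proof -
  obtain C where C: "stratum (cylinder X) C" "S \<times> {0..1} \<subseteq> C"
    using stratum_cylinder[OF S] .
  then obtain T where T: "stratum X T" "h ` C \<subseteq> T"
    using h unfolding stratified_map_def by blast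
  have "(x, 1) \<in> C" "(x, s) \<in> C" using C x s by auto
  then have "h (x, 1) \<in> T" "h (x, s) \<in> T" using T(2) by auto
  moreover have "h (x, 1) = x" using h1 stratum_subset_topspace[OF S] x by blast
  ultimately have "T = S" using stratum_eq_if_common_point[OF X T(1) S] x by auto
  with \<open>h (x, s) \<in> T\<close> show ?thesis by simp
qed

lemma stratified_homotopic_id_stays_in_stratum:
  assumes X: "filtered_space X" and "stratified_homotopic X X k id"
    and S: "stratum X S" and x: "x \<in> S"
  shows "k x \<in> S"
proof -
  obtain h where h: "stratified_map (cylinder X) X h"
    and ends: "\<And>x. x \<in> topspace (ftop X) \<Longrightarrow> h (x, 0) = k x \<and> h (x, 1) = x"
    using assms(2) unfolding stratified_homotopic_def by auto
  have "h (x, 0) \<in> S"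
    by (rule stratified_homotopy_to_id_stays_in_stratum[OF X h _ S x]) (simp_all add: ends)
  then show ?thesis using ends stratum_subset_topspace[OF S] x by auto
qed

lemma perversity_eq_if_dual_perversity_eq:
  assumes "dual_perversity X p S = dual_perversity Y q T" and "codim X S = codim Y T"
  shows "p S = q T"
  using assms by (cases "p S"; cases "q T") (auto simp: dual_perversity_def top_perversity_def)

lemma pdim_le_mono:
  assumes "pdim_le A b" "B \<subseteq> A" "b \<le> c"
  shows "pdim_le B c"
proof (cases "A = {}")
  case False
  then obtain \<T> where "finite \<T>" "\<forall>T\<in>\<T>. aff_indep_fin T \<and> ereal (real (card T)) - 1 \<le> b"
    "A \<subseteq> \<Union> (conv_hull_fin ` \<T>)"
    using assms(1) by (auto simp: pdim_le_def)
  then show ?thesis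
    unfolding pdim_le_def using assms(2,3) by (intro disjI2 exI[of _ \<T>]) (auto intro: order_trans)
qed (use assms in \<open>simp add: pdim_le_def\<close>)

lemma allowable_transfer:
  assumes F: "\<And>T. stratum Y T \<Longrightarrow> codim Y T > 0 \<Longrightarrow>
      stratum X (F T) \<and> codim X (F T) = codim Y T \<and> p (F T) \<le> q T"
    and pre: "\<And>t T. t \<in> standard_simplex n \<Longrightarrow> stratum Y T \<Longrightarrow> codim Y T > 0 \<Longrightarrow>
      \<tau> t \<in> T \<Longrightarrow> \<sigma> t \<in> F T"
    and \<sigma>: "allowable X p n \<sigma>"
  shows "allowable Y q n \<tau>"
  unfolding allowable_def
proof (intro allI impI)
  fix T assume T: "stratum Y T \<and> 0 < codim Y T"
  then have FT: "stratum X (F T)" "codim X (F T) = codim Y T" "p (F T) \<le> q T"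
    using F by auto
  have "pdim_le {t \<in> standard_simplex n. \<sigma> t \<in> F T}
        (ereal (real_of_int (int n - codim Y T)) + p (F T))"
    using \<sigma> FT T by (auto simp: allowable_def)
  moreover have "{t \<in> standard_simplex n. \<tau> t \<in> T} \<subseteq> {t \<in> standard_simplex n. \<sigma> t \<in> F T}"
    using pre T by auto
  ultimately show "pdim_le {t \<in> standard_simplex n. \<tau> t \<in> T}
        (ereal (real_of_int (int n - codim Y T)) + q T)"
    by (rule pdim_le_mono) (simp add: FT add_left_mono)
qed

lemma full_transfer:
  assumes F: "\<And>T. stratum Y T \<Longrightarrow> codim Y T > 0 \<Longrightarrow>
      stratum X (F T) \<and> codim X (F T) = codim Y T \<and> p (F T) \<le> q T"
    and pre: "\<And>t T. t \<in> standard_simplex n \<Longrightarrow> stratum Y T \<Longrightarrow> codim Y T > 0 \<Longrightarrow>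
      \<tau> t \<in> T \<Longrightarrow> \<sigma> t \<in> F T"
    and \<sigma>: "full X p n \<sigma>"
  shows "full Y q n \<tau>"
  using pre \<sigma>
proof (induction n arbitrary: \<sigma> \<tau>)
  case 0
  then show ?case using allowable_transfer[OF F 0(1)] by simp
next
  case (Suc j)
  have "full Y q j (singular_face (Suc j) k \<tau>)" if k: "k \<le> Suc j" for k
  proof (rule Suc.IH)
    show "full X p j (singular_face (Suc j) k \<sigma>)" using Suc.prems(2) k by simp
    fix t T assume "t \<in> standard_simplex j" "stratum Y T" "codim Y T > 0"
      and "singular_face (Suc j) k \<tau> t \<in> T"
    moreover from calculation have "simplical_face k t \<in> standard_simplex (Suc j)"
      using simplical_face_in_standard_simplex[of "Suc j" k t] k by simp
    ultimately show "singular_face (Suc j) k \<sigma> t \<in> F T"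
      using Suc.prems(1) by (simp add: singular_face_def)
  qed
  then show ?case using allowable_transfer[OF F Suc.prems(1)] Suc.prems(2) by simp
qed

lemma gajer_topspace:
  assumes "\<sigma> \<in> gajer X p n" "t \<in> standard_simplex n"
  shows "\<sigma> t \<in> topspace (ftop X)"
  using assms unfolding gajer_def singular_simplex_def continuous_map_def by auto

lemma simp_op_map_in_standard_simplex:
  assumes \<theta>: "simp_op m n \<theta>" and t: "t \<in> standard_simplex m"
  shows "simp_op_map m \<theta> t \<in> standard_simplex n"
proof -
  have t0: "\<And>i. 0 \<le> t i" and t1: "sum t {..m} = 1" using t by (auto simp: standard_simplex_def)
  have \<theta>n: "\<And>k. k \<le> m \<Longrightarrow> \<theta> k \<le> n" using \<theta> by (auto simp: simp_op_def)
  have "0 \<le> simp_op_map m \<theta> t i" for i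
    unfolding simp_op_map_def by (auto intro: sum_nonneg t0)
  moreover have "simp_op_map m \<theta> t i \<le> sum t {..m}" for i
    unfolding simp_op_map_def by (rule sum_mono2) (auto intro: t0)
  moreover have "simp_op_map m \<theta> t i = 0" if "i > n" for i
  proof -
    have empty: "{k. k \<le> m \<and> \<theta> k = i} = {}" using \<theta>n that by force
    show ?thesis unfolding simp_op_map_def by (subst empty) simp
  qed
  moreover have "(\<Sum>i\<le>n. simp_op_map m \<theta> t i) = sum t {..m}"
    unfolding simp_op_map_def using sum.group[of "{..m}" "{..n}" \<theta> t] \<theta>n by (auto simp: atMost_def)
  ultimately show ?thesis using t1 by (auto simp: standard_simplex_def)
qed

lemma simp_op_map_comp:
  assumes "simp_op m n \<theta>"
  shows "simp_op_map m (\<alpha> \<circ> \<theta>) t = simp_op_map n \<alpha> (simp_op_map m \<theta> t)"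
proof
  fix i
  have \<theta>n: "\<And>k. k \<le> m \<Longrightarrow> \<theta> k \<le> n" using assms by (auto simp: simp_op_def)
  have "simp_op_map n \<alpha> (simp_op_map m \<theta> t) i =
     (\<Sum>j\<in>{j. j \<le> n \<and> \<alpha> j = i}. sum t {k. k \<in> {k. k \<le> m \<and> \<alpha> (\<theta> k) = i} \<and> \<theta> k = j})"
    unfolding simp_op_map_def by (rule sum.cong) (auto intro!: sum.cong)
  also have "\<dots> = sum t {k. k \<le> m \<and> \<alpha> (\<theta> k) = i}"
    by (rule sum.group) (auto simp: \<theta>n)
  finally show "simp_op_map m (\<alpha> \<circ> \<theta>) t i = simp_op_map n \<alpha> (simp_op_map m \<theta> t) i"
    by (simp add: simp_op_map_def)
qed

lemma continuous_map_simp_op_map_coordinate: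
  "continuous_map (subtopology (powertop_real UNIV) (standard_simplex n)) (top_of_set {0..1})
     (\<lambda>t. simp_op_map n \<alpha> t i)"
proof -
  have "continuous_map (subtopology (powertop_real UNIV) (standard_simplex n)) euclideanreal
      (\<lambda>t. simp_op_map n \<alpha> t i)"
    unfolding simp_op_map_def
    by (intro continuous_map_sum continuous_map_from_subtopology continuous_map_product_projection) auto
  moreover have "simp_op_map n \<alpha> t i \<in> {0..1}" if t: "t \<in> standard_simplex n" for t
  proof -
    have "simp_op_map n \<alpha> t i \<le> sum t {..n}"
      unfolding simp_op_map_def by (rule sum_mono2) (use t in \<open>auto simp: standard_simplex_def\<close>)
    then show ?thesis
      using t by (auto simp: simp_op_map_def standard_simplex_def intro: sum_nonneg)
  qed
  ultimately show ?thesis by (simp add: continuous_map_in_subtopology)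
qed

lemma simplex_map_sop_act:
  assumes "simp_op m n \<theta>"
  shows "simplex_map m f (sop_act m \<theta> \<sigma>) = sop_act m \<theta> (simplex_map n f \<sigma>)"
proof
  fix t show "simplex_map m f (sop_act m \<theta> \<sigma>) t = sop_act m \<theta> (simplex_map n f \<sigma>) t"
    using simp_op_map_in_standard_simplex[OF assms, of t]
    by (simp add: simplex_map_def sop_act_def)
qed

lemma gajer_map_simplicial_map:
  assumes f: "continuous_map (ftop X) (ftop Y) f"
    and F: "\<And>T. stratum Y T \<Longrightarrow> codim Y T > 0 \<Longrightarrow>
      stratum X (F T) \<and> codim X (F T) = codim Y T \<and> p (F T) \<le> q T"
    and pre: "\<And>x T. x \<in> topspace (ftop X) \<Longrightarrow> stratum Y T \<Longrightarrow> codim Y T > 0 \<Longrightarrow>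
      f x \<in> T \<Longrightarrow> x \<in> F T"
  shows "simplicial_map (gajer X p) (gajer Y q) (gajer_map f)"
  unfolding simplicial_map_def
proof (intro conjI allI impI)
  fix n \<sigma> assume \<sigma>: "\<sigma> \<in> gajer X p n"
  have "singular_simplex n (ftop Y) (gajer_map f n \<sigma>)"
    using \<sigma> f singular_simplex_simplex_map by (auto simp: gajer_def gajer_map_def)
  moreover have "full Y q n (gajer_map f n \<sigma>)"
    using \<sigma> pre gajer_topspace[OF \<sigma>]
    by (intro full_transfer[OF F, of n _ \<sigma>]) (auto simp: gajer_def gajer_map_def simplex_map_def)
  ultimately show "gajer_map f n \<sigma> \<in> gajer Y q n" by (simp add: gajer_def)
qed (simp add: gajer_map_def simplex_map_sop_act)

lemma gajer_map_simplicial_map_if_strata_retract: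
  assumes X: "filtered_space X" and f: "stratified_map X Y f" and g: "stratified_map Y X g"
    and gf: "\<And>S x. stratum X S \<Longrightarrow> x \<in> S \<Longrightarrow> g (f x) \<in> S"
    and codim: "\<And>T. stratum Y T \<Longrightarrow> codim X (target_stratum X g T) = codim Y T"
    and perversity: "\<And>T. stratum Y T \<Longrightarrow> p (target_stratum X g T) \<le> q T"
  shows "simplicial_map (gajer X p) (gajer Y q) (gajer_map f)"
proof (rule gajer_map_simplicial_map[where F = "target_stratum X g"])
  show "continuous_map (ftop X) (ftop Y) f" using f by (simp add: stratified_map_def)
qed (use stratum_target_stratum[OF X g] codim perversity mem_target_stratum_if_image_mem[OF X g gf]
  in auto)

lemma gajer_map_comp:
  "(\<lambda>n \<sigma>. gajer_map g n (gajer_map f n \<sigma>)) = (\<lambda>n. simplex_map n (g \<circ> f))"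
  by (simp add: gajer_map_def simplex_map_compose fun_eq_iff)

lemma stratum_preserving_deformation_in_gajer:
  assumes X: "filtered_space X"
    and h: "continuous_map (prod_topology (ftop X) (top_of_set {0..1})) (ftop X) h"
    and strata: "\<And>S x s. stratum X S \<Longrightarrow> x \<in> S \<Longrightarrow> s \<in> {0..1} \<Longrightarrow> h (x, s) \<in> S"
    and a: "continuous_map (subtopology (powertop_real UNIV) (standard_simplex n)) (top_of_set {0..1}) a"
    and \<sigma>: "\<sigma> \<in> gajer X p n"
  shows "restrict (\<lambda>t. h (\<sigma> t, a t)) (standard_simplex n) \<in> gajer X p n"
proof -
  let ?\<tau> = "restrict (\<lambda>t. h (\<sigma> t, a t)) (standard_simplex n)"
  have "continuous_map (subtopology (powertop_real UNIV) (standard_simplex n)) (ftop X) \<sigma>"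
    using \<sigma> by (simp add: gajer_def singular_simplex_def)
  then have "continuous_map (subtopology (powertop_real UNIV) (standard_simplex n)) (ftop X)
      (\<lambda>t. h (\<sigma> t, a t))"
    using continuous_map_compose[OF continuous_map_pairedI[OF _ a] h] by (simp add: o_def)
  then have "singular_simplex n (ftop X) ?\<tau>"
    by (simp add: singular_simplex_def continuous_map_eq)
  moreover have "full X p n ?\<tau>"
  proof (rule full_transfer[where F = id])
    show "full X p n \<sigma>" using \<sigma> by (simp add: gajer_def)
    fix t T assume t: "t \<in> standard_simplex n" and T: "stratum X T" "?\<tau> t \<in> T"
    have "a t \<in> {0..1}"
      using a t by (fastforce dest: continuous_map_image_subset_topspace)
    then show "\<sigma> t \<in> id T"
      using mem_stratum_if_stratum_preserved[OF X gajer_topspace[OF \<sigma> t] strata T(1)] T t by simp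
  qed auto
  ultimately show ?thesis by (simp add: gajer_def)
qed

lemma elem_simplicial_homotopy_gajer:
  assumes X: "filtered_space X" and "stratified_homotopic X X k id"
  shows "elem_simplicial_homotopy (gajer X p) (gajer X p) (\<lambda>n. simplex_map n k) (\<lambda>n \<sigma>. \<sigma>)"
proof -
  obtain h where stratified: "stratified_map (cylinder X) X h"
    and ends: "\<And>x. x \<in> topspace (ftop X) \<Longrightarrow> h (x, 0) = k x \<and> h (x, 1) = x"
    using assms(2) unfolding stratified_homotopic_def by auto
  have h: "continuous_map (prod_topology (ftop X) (top_of_set {0..1})) (ftop X) h"
    using stratified by (simp add: stratified_map_def cylinder_def)
  have strata: "\<And>S x s. stratum X S \<Longrightarrow> x \<in> S \<Longrightarrow> s \<in> {0..1} \<Longrightarrow> h (x, s) \<in> S"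
    using stratified_homotopy_to_id_stays_in_stratum[OF X stratified] ends by blast
  (* t \<mapsto> \<alpha>\<^sub>* t 1 is the affine map \<Delta>\<^sup>n \<rightarrow> [0,1] induced by \<alpha> : [n] \<rightarrow> [1]; this makes H
     compatible with the simplicial operators *)
  define H where "H n \<sigma> \<alpha> = restrict (\<lambda>t. h (\<sigma> t, simp_op_map n \<alpha> t 1)) (standard_simplex n)"
    for n \<sigma> \<alpha>
  have H_gajer: "H n \<sigma> \<alpha> \<in> gajer X p n" if "\<sigma> \<in> gajer X p n" for n \<sigma> \<alpha>
    unfolding H_def
    by (rule stratum_preserving_deformation_in_gajer[OF X h strata
          continuous_map_simp_op_map_coordinate that])
  have H_natural: "H m (sop_act m \<theta> \<sigma>) (\<alpha> \<circ> \<theta>) = sop_act m \<theta> (H n \<sigma> \<alpha>)"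
    if "simp_op m n \<theta>" for m n \<theta> \<sigma> \<alpha>
    using simp_op_map_in_standard_simplex[OF that] simp_op_map_comp[OF that]
    by (auto simp: H_def sop_act_def)
  have H_0: "H n \<sigma> (\<lambda>_. 0) = simplex_map n k \<sigma>" if \<sigma>: "\<sigma> \<in> gajer X p n" for n \<sigma>
    unfolding H_def simplex_map_def
    by (intro restrict_ext) (simp add: simp_op_map_def ends gajer_topspace[OF \<sigma>])
  have H_1: "H n \<sigma> (\<lambda>_. 1) = \<sigma>" if \<sigma>: "\<sigma> \<in> gajer X p n" for n \<sigma>
  proof -
    have "H n \<sigma> (\<lambda>_. 1) = restrict \<sigma> (standard_simplex n)"
      unfolding H_def
      by (intro restrict_ext)
        (simp add: simp_op_map_def ends gajer_topspace[OF \<sigma>] standard_simplex_def atMost_def)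
    also have "\<dots> = \<sigma>"
      using \<sigma> by (simp add: gajer_def singular_simplex_def extensional_restrict)
    finally show ?thesis .
  qed
  have H_cong: "H n \<sigma> \<alpha> = H n \<sigma> \<beta>" if "\<forall>i\<le>n. \<alpha> i = \<beta> i" for n \<sigma> \<alpha> \<beta>
  proof -
    have "simp_op_map n \<alpha> = simp_op_map n \<beta>"
      unfolding simp_op_map_def using that by (intro ext sum.cong) auto
    then show ?thesis by (simp add: H_def)
  qed
  show ?thesis
    unfolding elem_simplicial_homotopy_def
  proof (intro exI[of _ H] conjI allI impI)
    fix n \<sigma> and \<alpha> \<beta> :: "nat \<Rightarrow> nat"
    assume "\<sigma> \<in> gajer X p n \<and> (\<forall>i\<le>n. \<alpha> i = \<beta> i)"
    then show "H n \<sigma> \<alpha> = H n \<sigma> \<beta>" by (intro H_cong) simp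
  next
    fix n \<sigma> assume "\<sigma> \<in> gajer X p n"
    then show "H n \<sigma> (\<lambda>_. 1) = \<sigma>" by (rule H_1)
  qed (simp_all add: H_gajer H_natural H_0 H_1)
qed

theorem mainTheorem11:
  fixes X :: "'a filtered_space" and Y :: "'b filtered_space"
    and p :: "'a set \<Rightarrow> ereal" and q :: "'b set \<Rightarrow> ereal"
    and f :: "'a \<Rightarrow> 'b"
  assumes "filtered_space X" and "perversity X p"
    and "filtered_space Y" and "perversity Y q"
    and "stratified_homotopy_equivalence X Y f"
    and "\<forall>S. stratum X S \<longrightarrow>
           dual_perversity X p S = pullback_perversity Y f (dual_perversity Y q) S"
  shows "simplicial_homotopy_equivalence (gajer X p) (gajer Y q) (gajer_map f)"
proof -
  note X = assms(1) and Y = assms(3)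
  have f: "stratified_map X Y f"
    using assms(5) by (simp add: stratified_homotopy_equivalence_def)
  obtain g where g: "stratified_map Y X g"
    and gf: "stratified_homotopic X X (g \<circ> f) id" and fg: "stratified_homotopic Y Y (f \<circ> g) id"
    and codim_f: "\<And>S. stratum X S \<Longrightarrow> codim X S = codim Y (target_stratum Y f S)"
    and codim_g: "\<And>T. stratum Y T \<Longrightarrow> codim Y T = codim X (target_stratum X g T)"
    using assms(5) unfolding stratified_homotopy_equivalence_def by blast
  have gf_strata: "\<And>S x. stratum X S \<Longrightarrow> x \<in> S \<Longrightarrow> g (f x) \<in> S"
    using stratified_homotopic_id_stays_in_stratum[OF X gf] by simp
  have fg_strata: "\<And>T y. stratum Y T \<Longrightarrow> y \<in> T \<Longrightarrow> f (g y) \<in> T"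
    using stratified_homotopic_id_stays_in_stratum[OF Y fg] by simp
  have pq: "p S = q (target_stratum Y f S)" if S: "stratum X S" for S
  proof (rule perversity_eq_if_dual_perversity_eq)
    show "dual_perversity X p S = dual_perversity Y q (target_stratum Y f S)"
      using assms(6) S by (simp add: pullback_perversity_def)
  qed (rule codim_f[OF S])
  have "simplicial_map (gajer X p) (gajer Y q) (gajer_map f)"
    using codim_g pq target_stratum_target_stratum[OF X Y f g fg_strata] stratum_target_stratum[OF X g]
    by (intro gajer_map_simplicial_map_if_strata_retract[OF X f g gf_strata]) auto
  moreover have "simplicial_map (gajer Y q) (gajer X p) (gajer_map g)"
    using codim_f pq by (intro gajer_map_simplicial_map_if_strata_retract[OF Y g f fg_strata]) auto
  moreover have "simplicially_homotopic (gajer X p) (gajer X p)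
      (\<lambda>n \<sigma>. gajer_map g n (gajer_map f n \<sigma>)) (\<lambda>n \<sigma>. \<sigma>)"
    unfolding gajer_map_comp by (rule simplicially_homotopic.elem[OF elem_simplicial_homotopy_gajer[OF X gf]])
  moreover have "simplicially_homotopic (gajer Y q) (gajer Y q)
      (\<lambda>n \<sigma>. gajer_map f n (gajer_map g n \<sigma>)) (\<lambda>n \<sigma>. \<sigma>)"
    unfolding gajer_map_comp by (rule simplicially_homotopic.elem[OF elem_simplicial_homotopy_gajer[OF Y fg]])
  ultimately show ?thesis
    unfolding simplicial_homotopy_equivalence_def by blast
qed

end
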